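(* Let $n\in\mathbb{N}$, $t\geq0$, $c\geq1$, and $\mathcal{E}'_n=c\cdot\mathcal{E}_n$. Then $$\mathrm{Diff}_t(\mathcal{E}_n):=\left|\mathrm{Pr}^{\mathcal{E}_n}(\lozenge^{\leq t}g)-\mathrm{Pr}^{\mathcal{E}'_n}(\lozenge^{\leq t}g)\right|=\sum_{k=0}^{n-1}\frac{t^k}{k!}\left(e^{-t}-c^ke^{-ct}\right).$$ If $c>1$, the function $t\mapsto\mathrm{Diff}_t(\mathcal{E}_n)$ has a local maximum at $t=\frac{n\ln(c)}{c-1}$ that is global on $[0,\infty)$.
   Context: The Erlang CTMC $\mathcal{E}_n$ has non-goal states $s_0,\dots,s_{n-1}$ and a goal state $s_n=g$, initial state $s_0$ (for $n=0$ it consists of $g$ only), all $s_0,\dots,s_{n-1}$ carry the same label and $g$ a different one, all exit rates equal $1$, $P(s_i,s_{i+1})=1$ for $0\leq i<n$, and $P(g,g)=1$. (In a CTMC the process stays in state $s$ an exponentially distributed time with rate $E(s)$ and then jumps to $s'$ with probability $P(s,s')$.) $c\cdot\mathcal{E}_n$ is obtained by multiplying all exit rates by $c$. $\mathrm{Pr}^{\mathcal{M}}(\lozenge^{\leq t}g)$ is the probability that $\mathcal{M}$ started in its initial state reaches $g$ within time $t$. *)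

theory Defs
  imports "HOL-Probability.Probability"
begin

text \<open>The (scaled) Erlang CTMC c * E_n: states s_0,...,s_{n-1} and goal g = s_n,
  initial state s_0, exit rate E(s_i) = c for every state, P(s_i,s_{i+1}) = 1, P(g,g) = 1.
  Since the embedded jump chain is deterministic, the only path from s_0 visits
  s_0, s_1, ..., s_{n-1}, g in order; the sojourn time in s_i is an exponentially
  distributed random variable with rate E(s_i), and the sojourn times are independent.
  Hence the goal g is reached within time t iff the sum of the first n sojourn times is
  at most t.\<close>

definition erlang_exit_rate :: "real \<Rightarrow> nat \<Rightarrow> real" where
  "erlang_exit_rate c i = c"

definition sojourn_space :: "(nat \<Rightarrow> real) \<Rightarrow> nat \<Rightarrow> (nat \<Rightarrow> real) measure" where
  "sojourn_space E n = PiM {..<n} (\<lambda>i. density lborel (exponential_density (E i)))"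

definition reach_within :: "(nat \<Rightarrow> real) \<Rightarrow> nat \<Rightarrow> real \<Rightarrow> real" where
  "reach_within E n t =
     measure (sojourn_space E n) {T \<in> space (sojourn_space E n). (\<Sum>i<n. T i) \<le> t}"

text \<open>Pr^{c * E_n}(reach g within t); the unscaled chain E_n is the case c = 1.\<close>
definition Pr_erlang :: "real \<Rightarrow> nat \<Rightarrow> real \<Rightarrow> real" where
  "Pr_erlang c n t = reach_within (erlang_exit_rate c) n t"

definition Diff_erlang :: "real \<Rightarrow> nat \<Rightarrow> real \<Rightarrow> real" where
  "Diff_erlang c n t = \<bar>Pr_erlang 1 n t - Pr_erlang c n t\<bar>"

end

theory Submission
  imports Defs
begin

text \<open>The sojourn times of c \<cdot> E_n are i.i.d. exponential with rate c, so their sum is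
  Erlang distributed and the goal is reached within time t with probability
  1 - Q_n(c t), where Q_n(x) = \<Sum>k<n. x^k e^{-x} / k! is the Erlang tail.  Since Q_n is
  decreasing with Q_n'(x) = -x^{n-1} e^{-x} / (n-1)!, the difference is
  Q_n(t) - Q_n(c t), whose derivative t^{n-1}/(n-1)! (c^n e^{-ct} - e^{-t})
  is nonnegative before t0 = n ln c / (c - 1) and nonpositive after it.\<close>

lemma indep_vars_PiM_components:
  assumes M: "\<And>i. i \<in> I \<Longrightarrow> prob_space (M i)"
  shows "prob_space.indep_vars (PiM I M) M (\<lambda>i x. x i) I"
proof -
  interpret prob_space "PiM I M" using M by (rule prob_space_PiM)
  show ?thesis
  proof (cases "I = {}")
    case True
    show ?thesis unfolding indep_vars_def2 indep_sets_def using True by simp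
  next
    case False
    have "distr (PiM I M) (PiM I M) (\<lambda>x. \<lambda>i\<in>I. x i) = distr (PiM I M) (PiM I M) (\<lambda>x. x)"
      by (rule distr_cong) (auto simp: space_PiM)
    also have "\<dots> = (\<Pi>\<^sub>M i\<in>I. distr (PiM I M) (M i) (\<lambda>x. x i))"
      by (auto simp: distr_PiM_component M intro!: PiM_cong)
    finally show ?thesis
      using False by (subst indep_vars_iff_distr_eq_PiM') auto
  qed
qed

definition erlang_tail :: "nat \<Rightarrow> real \<Rightarrow> real" where
  "erlang_tail n x = (\<Sum>k<n. x ^ k * exp (- x) / fact k)"

lemma distributed_sum_sojourn_times:
  assumes c: "c > 0" and n: "n > 0"
  shows "distributed (sojourn_space (\<lambda>_. c) n) lborel (\<lambda>T. \<Sum>i<n. T i)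
           (erlang_density (n - 1) c)"
proof -
  define D where "D = density lborel (exponential_density c)"
  have prob_D: "prob_space D"
    unfolding D_def using c by (rule prob_space_exponential_density)
  have space_eq: "sojourn_space (\<lambda>_. c) n = PiM {..<n} (\<lambda>_. D)"
    by (simp add: sojourn_space_def D_def)
  interpret prob_space "PiM {..<n} (\<lambda>_. D)"
    using prob_D by (rule prob_space_PiM)
  have sets_D: "sets D = sets borel"
    by (simp add: D_def)
  have "distributed (PiM {..<n} (\<lambda>_. D)) lborel (\<lambda>T. T i) (exponential_density c)"
    if "i < n" for i
  proof -
    have "distr (PiM {..<n} (\<lambda>_. D)) lborel (\<lambda>T. T i) = distr (PiM {..<n} (\<lambda>_. D)) D (\<lambda>T. T i)"
      using sets_D by (intro distr_cong) auto
    also have "\<dots> = D"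
      using prob_D that by (intro distr_PiM_component) auto
    finally have "distr (PiM {..<n} (\<lambda>_. D)) lborel (\<lambda>T. T i) = D" .
    moreover have "(\<lambda>T. T i) \<in> measurable (PiM {..<n} (\<lambda>_. D)) lborel"
      using that sets_D by (simp add: measurable_cong_sets[OF refl sets_D, symmetric])
    ultimately show ?thesis
      unfolding distributed_def D_def by simp
  qed
  moreover have "indep_vars (\<lambda>_. borel) (\<lambda>i T. T i) {..<n}"
    using indep_vars_PiM_components[of "{..<n}" "\<lambda>_. D"] prob_D
    by (simp add: indep_vars_def2 sets_D measurable_cong_sets[OF refl sets_D])
  ultimately show ?thesis
    unfolding space_eq using exponential_distributed_sum[of "{..<n}" c "\<lambda>i T. T i"] c n
    by auto
qed

lemma Pr_erlang_eq:
  assumes c: "c > 0" and t: "t \<ge> 0"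
  shows "Pr_erlang c n t = 1 - erlang_tail n (c * t)"
proof -
  interpret prob_space "sojourn_space (\<lambda>_. c) n"
    unfolding sojourn_space_def by (rule prob_space_PiM) (simp add: c prob_space_exponential_density)
  have Pr_eq: "Pr_erlang c n t = prob {T \<in> space (sojourn_space (\<lambda>_. c) n). (\<Sum>i<n. T i) \<le> t}"
    by (simp add: Pr_erlang_def reach_within_def erlang_exit_rate_def[abs_def])
  show ?thesis
  proof (cases n)
    case 0
    then have "{T \<in> space (sojourn_space (\<lambda>_. c) n). (\<Sum>i<n. T i) \<le> t} = space (sojourn_space (\<lambda>_. c) n)"
      using t by auto
    then have "Pr_erlang c n t = 1"
      by (simp only: Pr_eq prob_space)
    then show ?thesis
      using 0 by (simp add: erlang_tail_def)
  next
    case (Suc m)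
    have "prob {T \<in> space (sojourn_space (\<lambda>_. c) n). (\<Sum>i<n. T i) \<le> t} = erlang_CDF m c t"
      using distributed_sum_sojourn_times[OF c, of n] Suc c t by (intro erlang_distributed_le) simp_all
    then have "Pr_erlang c n t = erlang_CDF m c t"
      unfolding Pr_eq .
    then show ?thesis
      using Suc t
      by (simp add: erlang_CDF_def erlang_tail_def lessThan_Suc_atMost power_mult_distrib mult_ac)
  qed
qed

lemma has_real_derivative_erlang_tail:
  "(erlang_tail (Suc m) has_real_derivative - (x ^ m * exp (- x) / fact m)) (at x)"
proof (induction m)
  case 0
  show ?case
    unfolding erlang_tail_def by (auto intro!: derivative_eq_intros)
next
  case (Suc m)
  have pow: "((\<lambda>x. x ^ Suc m) has_real_derivative Suc m * x ^ m) (at x)"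
    using DERIV_pow[of "Suc m" x] by simp
  have exp: "((\<lambda>x. exp (- x)) has_real_derivative - exp (- x)) (at x)"
    by (auto intro!: derivative_eq_intros)
  have last_term: "((\<lambda>x. x ^ Suc m * exp (- x) / fact (Suc m)) has_real_derivative
      x ^ m * exp (- x) / fact m - x ^ Suc m * exp (- x) / fact (Suc m)) (at x)"
    by (rule DERIV_cong[OF DERIV_cdivide[OF DERIV_mult[OF pow exp]]])
       (simp add: fact_Suc diff_divide_distrib)
  have "erlang_tail (Suc (Suc m)) = (\<lambda>x. erlang_tail (Suc m) x + x ^ Suc m * exp (- x) / fact (Suc m))"
    by (simp add: erlang_tail_def fun_eq_iff)
  then show ?case
    using DERIV_add[OF Suc last_term] by simp
qed

lemma erlang_tail_antimono:
  assumes "0 \<le> x" "x \<le> y"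
  shows "erlang_tail n y \<le> erlang_tail n x"
proof (cases n)
  case 0
  then show ?thesis by (simp add: erlang_tail_def)
next
  case (Suc m)
  show ?thesis
    using assms unfolding Suc
    by (intro DERIV_nonpos_imp_nonincreasing[OF \<open>x \<le> y\<close>])
       (auto intro!: exI has_real_derivative_erlang_tail)
qed

lemma max_at_derivative_sign_change:
  fixes f f' :: "real \<Rightarrow> real"
  assumes deriv: "\<And>x. a \<le> x \<Longrightarrow> (f has_real_derivative f' x) (at x)"
    and up: "\<And>x. a \<le> x \<Longrightarrow> x \<le> x0 \<Longrightarrow> f' x \<ge> 0"
    and down: "\<And>x. x0 \<le> x \<Longrightarrow> f' x \<le> 0"
    and "a \<le> x0" "a \<le> x"
  shows "f x \<le> f x0"
proof (cases "x \<le> x0")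
  case True
  show ?thesis
    using \<open>a \<le> x\<close> by (intro DERIV_nonneg_imp_nondecreasing[OF True]) (meson deriv up order_trans)
next
  case False
  show ?thesis
    using \<open>a \<le> x0\<close> False
    by (intro DERIV_nonpos_imp_nonincreasing[of x0 x]) (auto intro: deriv down order_trans)
qed

lemma Diff_erlang_eq_erlang_tail:
  assumes "c \<ge> 1" "t \<ge> 0"
  shows "Diff_erlang c n t = erlang_tail n t - erlang_tail n (c * t)"
proof -
  have "erlang_tail n (c * t) \<le> erlang_tail n t"
    using assms by (intro erlang_tail_antimono) (auto simp: mult_le_cancel_right1)
  then show ?thesis
    using assms by (simp add: Diff_erlang_def Pr_erlang_eq)
qed

lemma erlang_tail_diff_scaled_eq_sum:
  "erlang_tail n t - erlang_tail n (c * t) =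
     (\<Sum>k<n. t ^ k / fact k * (exp (- t) - c ^ k * exp (- c * t)))"
  unfolding erlang_tail_def sum_subtractf[symmetric]
  by (intro sum.cong refl) (simp add: field_simps power_mult_distrib)

lemma pow_mult_exp_minus_exp_eq:
  assumes "c > 1"
  shows "c ^ n * exp (- c * t) - exp (- t) =
           exp (- t) * (exp ((c - 1) * (real n * ln c / (c - 1) - t)) - 1)"
proof -
  have "(c - 1) * (real n * ln c / (c - 1) - t) = real n * ln c + (- c * t - - t)"
    using assms by (simp add: field_simps)
  then have "exp ((c - 1) * (real n * ln c / (c - 1) - t)) = c ^ n * (exp (- c * t) / exp (- t))"
    using assms by (simp only: exp_add exp_diff exp_of_nat_mult exp_ln)
  then show ?thesis
    by (simp add: field_simps)
qed

lemma Diff_erlang_le_at_peak: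
  assumes c: "c > 1" and t: "t \<ge> 0"
  shows "Diff_erlang c n t \<le> Diff_erlang c n (real n * ln c / (c - 1))"
proof (cases n)
  case 0
  then show ?thesis
    using c t by (simp add: Diff_erlang_eq_erlang_tail erlang_tail_def)
next
  case (Suc m)
  define t0 where "t0 = real n * ln c / (c - 1)"
  define g' where "g' x = x ^ m / fact m * (c ^ n * exp (- c * x) - exp (- x))" for x
  have t0: "t0 \<ge> 0"
    using c by (simp add: t0_def)
  have deriv: "((\<lambda>x. erlang_tail n x - erlang_tail n (c * x)) has_real_derivative g' x) (at x)" for x
    unfolding Suc
    by (rule DERIV_cong[OF DERIV_diff[OF has_real_derivative_erlang_tail
               DERIV_chain2[OF has_real_derivative_erlang_tail DERIV_cmult_Id]]])
       (simp add: g'_def Suc field_simps power_mult_distrib)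
  have up: "g' x \<ge> 0" if "0 \<le> x" "x \<le> t0" for x
  proof -
    have "exp ((c - 1) * (t0 - x)) \<ge> 1"
      using that c by simp
    then have "c ^ n * exp (- c * x) - exp (- x) \<ge> 0"
      unfolding pow_mult_exp_minus_exp_eq[OF c] t0_def[symmetric] by simp
    then show ?thesis
      using that by (simp add: g'_def)
  qed
  have down: "g' x \<le> 0" if "t0 \<le> x" for x
  proof -
    have "exp ((c - 1) * (t0 - x)) \<le> 1"
      using that c by (simp add: mult_nonneg_nonpos)
    then have "c ^ n * exp (- c * x) - exp (- x) \<le> 0"
      unfolding pow_mult_exp_minus_exp_eq[OF c] t0_def[symmetric] by (simp add: mult_nonneg_nonpos)
    moreover have "x ^ m / fact m \<ge> 0"
      using that t0 by simp
    ultimately show ?thesis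
      unfolding g'_def by (metis mult_nonneg_nonpos)
  qed
  have "erlang_tail n t - erlang_tail n (c * t) \<le> erlang_tail n t0 - erlang_tail n (c * t0)"
    by (rule max_at_derivative_sign_change[where a = 0 and f' = g', OF deriv up down t0 t])
  then show ?thesis
    using c t t0 by (simp add: Diff_erlang_eq_erlang_tail t0_def)
qed

theorem proposition4:
  fixes n :: nat and c :: real
  assumes "c \<ge> 1"
  shows "(\<forall>t\<ge>0. Diff_erlang c n t =
            (\<Sum>k<n. t ^ k / fact k * (exp (- t) - c ^ k * exp (- c * t))))
       \<and> (c > 1 \<longrightarrow>
            (let t0 = real n * ln c / (c - 1) in
               (\<exists>\<delta>>0. \<forall>t\<ge>0. \<bar>t - t0\<bar> < \<delta> \<longrightarrow> Diff_erlang c n t \<le> Diff_erlang c n t0)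
             \<and> (\<forall>t\<ge>0. Diff_erlang c n t \<le> Diff_erlang c n t0)))"
proof (intro conjI impI)
  show "\<forall>t\<ge>0. Diff_erlang c n t =
          (\<Sum>k<n. t ^ k / fact k * (exp (- t) - c ^ k * exp (- c * t)))"
    using assms by (simp add: Diff_erlang_eq_erlang_tail erlang_tail_diff_scaled_eq_sum)
next
  assume "c > 1"
  then show "let t0 = real n * ln c / (c - 1) in
               (\<exists>\<delta>>0. \<forall>t\<ge>0. \<bar>t - t0\<bar> < \<delta> \<longrightarrow> Diff_erlang c n t \<le> Diff_erlang c n t0)
             \<and> (\<forall>t\<ge>0. Diff_erlang c n t \<le> Diff_erlang c n t0)"
    unfolding Let_def using Diff_erlang_le_at_peak by (auto intro: exI[of _ 1])
qed

end
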